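(* Let $M$ be a monoid with identity $1$. Then $\sigma_m^*(M)<\sigma_m(M)$ if and only if $M-\{1\}$ is a subsemigroup of $M$ which is a group and $\sigma_s(M-\{1\})>2$. Moreover, if $\sigma_m^*(M)<\sigma_m(M)$, then $\sigma_m^*(M)=2$.
   Context: A subsemigroup is a nonempty subset closed under the operation. For a monoid $M$: a submonoid is a subsemigroup containing the identity of $M$; a monoidal subsemigroup is a subsemigroup that is a monoid in its own right (identity possibly different from that of $M$). $\sigma_s$, $\sigma_m$, $\sigma_m^*$ denote the least positive integer $n$ such that the structure is the union of $n$ proper subsemigroups, proper submonoids, respectively proper monoidal subsemigroups, or $\infty$ if no such finite $n$ exists (with the convention that $\infty<\infty$ is false). *)

theory Defs
  imports "HOL-Algebra.Group" "HOL-Library.Extended_Nat"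
begin

definition subsemigroup :: "'a set \<Rightarrow> ('a, 'b) monoid_scheme \<Rightarrow> bool" where
  "subsemigroup H G \<longleftrightarrow> H \<noteq> {} \<and> H \<subseteq> carrier G \<and>
     (\<forall>x\<in>H. \<forall>y\<in>H. x \<otimes>\<^bsub>G\<^esub> y \<in> H)"

text \<open>A monoidal subsemigroup: a subsemigroup which is a monoid in its own right
  (with some identity e, possibly different from the identity of G).\<close>
definition monoidal_subsemigroup :: "'a set \<Rightarrow> ('a, 'b) monoid_scheme \<Rightarrow> bool" where
  "monoidal_subsemigroup H G \<longleftrightarrow> subsemigroup H G \<and>
     (\<exists>e\<in>H. \<forall>x\<in>H. e \<otimes>\<^bsub>G\<^esub> x = x \<and> x \<otimes>\<^bsub>G\<^esub> e = x)"

text \<open>Covering number: least positive n such that S is the union of n proper subsets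
  of S having property P; \<infinity> if there is no such finite n (Inf {} = \<infinity> in enat).\<close>
definition cover_num :: "'a set \<Rightarrow> ('a set \<Rightarrow> bool) \<Rightarrow> enat" where
  "cover_num S P = Inf {enat (card \<A>) | \<A>. finite \<A> \<and> \<A> \<noteq> {} \<and>
      (\<forall>A\<in>\<A>. P A \<and> A \<subseteq> S \<and> A \<noteq> S) \<and> \<Union>\<A> = S}"

definition sigma_s :: "('a, 'b) monoid_scheme \<Rightarrow> 'a set \<Rightarrow> enat" where
  "sigma_s G S = cover_num S (\<lambda>A. subsemigroup A G)"

definition sigma_m :: "('a, 'b) monoid_scheme \<Rightarrow> enat" where
  "sigma_m G = cover_num (carrier G) (\<lambda>A. submonoid A G)"

definition sigma_m_star :: "('a, 'b) monoid_scheme \<Rightarrow> enat" where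
  "sigma_m_star G = cover_num (carrier G) (\<lambda>A. monoidal_subsemigroup A G)"

end

theory Submission
  imports Defs
begin

text \<open>Write \<open>T = M - {1}\<close>. Adjoining or removing \<open>1\<close> turns covers of \<open>T\<close> by proper
  subsemigroups into covers of \<open>M\<close> by proper submonoids and back, so \<open>\<sigma>\<^sub>m(M) \<le> \<sigma>\<^sub>s(T)\<close>, with
  equality when \<open>T\<close> is a subsemigroup. A cover of \<open>M\<close> by proper monoidal subsemigroups
  that avoids \<open>T\<close> is turned into a submonoid cover in the same way, so \<open>\<sigma>\<^sub>m\<^sup>*(M) < \<sigma>\<^sub>m(M)\<close>
  forces \<open>T\<close> to be a monoidal subsemigroup, and then \<open>{{1}, T}\<close> shows \<open>\<sigma>\<^sub>m\<^sup>*(M) = 2\<close>.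
  Finally, in a monoid \<open>T\<close> with identity \<open>e\<close> the left invertible elements \<open>L\<close> and their
  complement \<open>T - L\<close> are both closed under multiplication; so \<open>\<sigma>\<^sub>s(T) > 2\<close> forces
  \<open>L = T\<close>, i.e. \<open>T\<close> is a group.\<close>

definition proper_cover :: "'a set \<Rightarrow> ('a set \<Rightarrow> bool) \<Rightarrow> 'a set set \<Rightarrow> bool" where
  "proper_cover S P \<A> \<longleftrightarrow> finite \<A> \<and> \<A> \<noteq> {} \<and> (\<forall>A\<in>\<A>. P A \<and> A \<subseteq> S \<and> A \<noteq> S) \<and> \<Union>\<A> = S"

lemma cover_num_eq_Inf_proper_cover:
  "cover_num S P = Inf {enat (card \<A>) | \<A>. proper_cover S P \<A>}"
  by (simp add: cover_num_def proper_cover_def)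

lemma cover_num_le_card:
  assumes "proper_cover S P \<A>"
  shows "cover_num S P \<le> enat (card \<A>)"
  unfolding cover_num_eq_Inf_proper_cover using assms by (intro Inf_lower) blast

lemma cover_num_lessE:
  assumes "cover_num S P < x"
  obtains \<A> where "proper_cover S P \<A>" "enat (card \<A>) < x"
  using assms unfolding cover_num_eq_Inf_proper_cover Inf_less_iff by blast

lemma two_le_card_proper_cover:
  assumes "proper_cover S P \<A>"
  shows "2 \<le> card \<A>"
proof -
  have "card \<A> \<noteq> 0" using assms by (simp add: proper_cover_def)
  moreover have "card \<A> \<noteq> 1"
  proof
    assume "card \<A> = 1"
    then obtain A where "\<A> = {A}" by (metis card_1_singletonE)
    with assms show False by (auto simp: proper_cover_def)
  qed
  ultimately show ?thesis by arith
qed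

lemma two_le_cover_num: "2 \<le> cover_num S P"
  unfolding cover_num_eq_Inf_proper_cover
  by (rule Inf_greatest) (auto simp: numeral_eq_enat dest: two_le_card_proper_cover)

lemma cover_num_le_2_if_proper_cover_pair:
  assumes "proper_cover S P {A, B}"
  shows "cover_num S P \<le> 2"
proof -
  have "card {A, B} = 2" using two_le_card_proper_cover [OF assms] by (cases "A = B") auto
  with cover_num_le_card [OF assms] show ?thesis by (simp add: numeral_eq_enat)
qed

lemma cover_num_le_cover_num:
  assumes "\<And>\<A>. proper_cover S P \<A> \<Longrightarrow> \<exists>\<B>. proper_cover T Q \<B> \<and> card \<B> \<le> card \<A>"
  shows "cover_num T Q \<le> cover_num S P"
  unfolding cover_num_eq_Inf_proper_cover [of S]
proof (rule Inf_greatest)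
  fix x assume "x \<in> {enat (card \<A>) | \<A>. proper_cover S P \<A>}"
  then obtain \<A> where "x = enat (card \<A>)" "proper_cover S P \<A>" by blast
  with assms obtain \<B> where "proper_cover T Q \<B>" "card \<B> \<le> card \<A>" by blast
  then have "cover_num T Q \<le> enat (card \<B>)" by (simp add: cover_num_le_card)
  also have "\<dots> \<le> x" using \<open>card \<B> \<le> card \<A>\<close> \<open>x = enat (card \<A>)\<close> by simp
  finally show "cover_num T Q \<le> x" .
qed

context monoid
begin

lemma submonoid_insert_one:
  assumes "subsemigroup X G"
  shows "submonoid (insert \<one> X) G"
  using assms by (intro submonoid.intro) (auto simp: subsemigroup_def)

lemma subsemigroup_Diff_one:
  assumes "submonoid X G" "X \<noteq> {\<one>}" "subsemigroup (carrier G - {\<one>}) G"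
  shows "subsemigroup (X - {\<one>}) G"
proof -
  have "\<one> \<in> X" "X \<subseteq> carrier G" using assms(1) by (auto simp: submonoid_def)
  with assms show ?thesis
    by (auto simp: subsemigroup_def submonoid.m_closed)
qed

lemma proper_submonoid_cover_insert_one:
  assumes "finite \<A>" "\<A> \<noteq> {}" "carrier G - {\<one>} \<subseteq> \<Union>\<A>"
    and "\<And>X. X \<in> \<A> \<Longrightarrow> subsemigroup X G \<and> X \<noteq> carrier G \<and> X \<noteq> carrier G - {\<one>}"
  shows "proper_cover (carrier G) (\<lambda>X. submonoid X G) (insert \<one> ` \<A>)"
  unfolding proper_cover_def
proof (intro conjI ballI)
  fix Y assume "Y \<in> insert \<one> ` \<A>"
  then obtain X where X: "X \<in> \<A>" "Y = insert \<one> X" by blast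
  with assms(4) have X_sub: "subsemigroup X G" and "X \<noteq> carrier G" "X \<noteq> carrier G - {\<one>}"
    by auto
  moreover from X_sub have "X \<subseteq> carrier G" by (simp add: subsemigroup_def)
  ultimately have "insert \<one> X \<noteq> carrier G" by (cases "\<one> \<in> X") (auto simp: insert_absorb)
  with X X_sub \<open>X \<subseteq> carrier G\<close> show "submonoid Y G" "Y \<subseteq> carrier G" "Y \<noteq> carrier G"
    using submonoid_insert_one by auto
next
  have "X \<subseteq> carrier G" if "X \<in> \<A>" for X
    using assms(4) [OF that] by (simp add: subsemigroup_def)
  with assms(2,3) show "\<Union> (insert \<one> ` \<A>) = carrier G" by blast
qed (use assms in auto)

lemma sigma_m_le_sigma_s: "sigma_m G \<le> sigma_s G (carrier G - {\<one>})"
  unfolding sigma_m_def sigma_s_def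
proof (rule cover_num_le_cover_num)
  fix \<A> assume \<A>: "proper_cover (carrier G - {\<one>}) (\<lambda>X. subsemigroup X G) \<A>"
  then have "proper_cover (carrier G) (\<lambda>X. submonoid X G) (insert \<one> ` \<A>)"
    by (intro proper_submonoid_cover_insert_one) (auto simp: proper_cover_def)
  moreover have "card (insert \<one> ` \<A>) \<le> card \<A>"
    using \<A> by (simp add: proper_cover_def card_image_le)
  ultimately show "\<exists>\<B>. proper_cover (carrier G) (\<lambda>X. submonoid X G) \<B> \<and> card \<B> \<le> card \<A>"
    by blast
qed

lemma sigma_s_le_sigma_m:
  assumes T: "subsemigroup (carrier G - {\<one>}) G"
  shows "sigma_s G (carrier G - {\<one>}) \<le> sigma_m G"
  unfolding sigma_m_def sigma_s_def
proof (rule cover_num_le_cover_num)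
  fix \<A> assume \<A>: "proper_cover (carrier G) (\<lambda>X. submonoid X G) \<A>"
  define \<B> where "\<B> = (\<lambda>X. X - {\<one>}) ` (\<A> - {{\<one>}})"
  have "proper_cover (carrier G - {\<one>}) (\<lambda>X. subsemigroup X G) \<B>"
    unfolding proper_cover_def
  proof (intro conjI ballI)
    fix Y assume "Y \<in> \<B>"
    then obtain X where X: "X \<in> \<A>" "X \<noteq> {\<one>}" "Y = X - {\<one>}" by (auto simp: \<B>_def)
    with \<A> have "submonoid X G" "X \<subseteq> carrier G" "X \<noteq> carrier G" by (auto simp: proper_cover_def)
    moreover from this(1) have "\<one> \<in> X" by (simp add: submonoid_def)
    ultimately show "subsemigroup Y G" "Y \<subseteq> carrier G - {\<one>}" "Y \<noteq> carrier G - {\<one>}"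
      using X T subsemigroup_Diff_one by auto
  next
    show "\<Union> \<B> = carrier G - {\<one>}"
      using \<A> by (auto simp: \<B>_def proper_cover_def)
    with T show "\<B> \<noteq> {}" by (auto simp: subsemigroup_def)
  qed (use \<A> in \<open>simp add: \<B>_def proper_cover_def\<close>)
  moreover have "card \<B> \<le> card \<A>"
  proof -
    have "finite \<A>" using \<A> by (simp add: proper_cover_def)
    then have "card \<B> \<le> card (\<A> - {{\<one>}})" by (simp add: \<B>_def card_image_le)
    also have "\<dots> \<le> card \<A>" using \<open>finite \<A>\<close> by (simp add: card_mono)
    finally show ?thesis .
  qed
  ultimately show "\<exists>\<B>. proper_cover (carrier G - {\<one>}) (\<lambda>X. subsemigroup X G) \<B> \<and>
      card \<B> \<le> card \<A>"
    by blast
qed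

lemma sigma_m_eq_sigma_s:
  assumes "subsemigroup (carrier G - {\<one>}) G"
  shows "sigma_m G = sigma_s G (carrier G - {\<one>})"
  using sigma_m_le_sigma_s sigma_s_le_sigma_m [OF assms] by (rule order.antisym)

lemma monoidal_subsemigroup_if_sigma_m_star_less_sigma_m:
  assumes "sigma_m_star G < sigma_m G"
  shows "monoidal_subsemigroup (carrier G - {\<one>}) G"
proof -
  obtain \<A> where \<A>: "proper_cover (carrier G) (\<lambda>X. monoidal_subsemigroup X G) \<A>"
    and card_less: "enat (card \<A>) < sigma_m G"
    using assms unfolding sigma_m_star_def by (rule cover_num_lessE)
  have "carrier G - {\<one>} \<in> \<A>"
  proof (rule ccontr)
    assume "carrier G - {\<one>} \<notin> \<A>"
    with \<A> have "proper_cover (carrier G) (\<lambda>X. submonoid X G) (insert \<one> ` \<A>)"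
      by (intro proper_submonoid_cover_insert_one)
        (auto simp: proper_cover_def monoidal_subsemigroup_def)
    then have "sigma_m G \<le> enat (card (insert \<one> ` \<A>))"
      unfolding sigma_m_def by (rule cover_num_le_card)
    also have "\<dots> \<le> enat (card \<A>)"
      using \<A> by (simp add: proper_cover_def card_image_le)
    finally show False using card_less by simp
  qed
  with \<A> show ?thesis by (simp add: proper_cover_def)
qed

lemma sigma_m_star_le_2:
  assumes "monoidal_subsemigroup (carrier G - {\<one>}) G"
  shows "sigma_m_star G \<le> 2"
proof -
  have "proper_cover (carrier G) (\<lambda>X. monoidal_subsemigroup X G) {{\<one>}, carrier G - {\<one>}}"
    using assms by (auto simp: proper_cover_def monoidal_subsemigroup_def subsemigroup_def)
  then show ?thesis
    unfolding sigma_m_star_def by (rule cover_num_le_2_if_proper_cover_pair)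
qed

lemma sigma_s_le_2_if_not_left_invertible:
  assumes T: "subsemigroup T G" and e: "e \<in> T" "\<And>x. x \<in> T \<Longrightarrow> e \<otimes> x = x"
    and x: "x \<in> T" "\<not> (\<exists>y\<in>T. y \<otimes> x = e)"
  shows "sigma_s G T \<le> 2"
proof -
  define L where "L = {x\<in>T. \<exists>y\<in>T. y \<otimes> x = e}"
  have T_carrier: "a \<in> carrier G" if "a \<in> T" for a
    using T that by (auto simp: subsemigroup_def)
  have T_closed: "a \<otimes> b \<in> T" if "a \<in> T" "b \<in> T" for a b
    using T that by (auto simp: subsemigroup_def)
  have "e \<in> L" using e by (auto simp: L_def)
  have "x \<in> T - L" using x by (simp add: L_def)
  have "L \<subseteq> T" by (auto simp: L_def)
  have "subsemigroup L G"
    unfolding subsemigroup_def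
  proof (intro conjI ballI)
    fix a b assume "a \<in> L" "b \<in> L"
    then obtain y y' where y: "y \<in> T" "y \<otimes> a = e" and y': "y' \<in> T" "y' \<otimes> b = e"
      and ab: "a \<in> T" "b \<in> T"
      unfolding L_def by blast
    have "(y' \<otimes> y) \<otimes> (a \<otimes> b) = y' \<otimes> ((y \<otimes> a) \<otimes> b)"
      using y(1) y'(1) ab by (simp only: T_carrier m_assoc m_closed)
    also have "\<dots> = e" using y y' ab e(2) by simp
    finally show "a \<otimes> b \<in> L" using y y' ab T_closed unfolding L_def by blast
  qed (use \<open>e \<in> L\<close> \<open>L \<subseteq> T\<close> T_carrier in blast)+
  moreover have "subsemigroup (T - L) G"
    unfolding subsemigroup_def
  proof (intro conjI ballI)
    fix a b assume ab: "a \<in> T - L" "b \<in> T - L"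
    have "a \<otimes> b \<notin> L"
    proof
      assume "a \<otimes> b \<in> L"
      then obtain y where y: "y \<in> T" "y \<otimes> (a \<otimes> b) = e" unfolding L_def by blast
      moreover have "a \<in> T" "b \<in> T" using ab by auto
      ultimately have "(y \<otimes> a) \<otimes> b = e" by (simp only: T_carrier m_assoc m_closed)
      then have "b \<in> L" using y ab T_closed unfolding L_def by blast
      with ab show False by simp
    qed
    with ab T_closed show "a \<otimes> b \<in> T - L" by simp
  qed (use \<open>x \<in> T - L\<close> T_carrier in blast)+
  ultimately have "proper_cover T (\<lambda>X. subsemigroup X G) {L, T - L}"
    using \<open>e \<in> L\<close> \<open>x \<in> T - L\<close> \<open>L \<subseteq> T\<close> unfolding proper_cover_def by blast
  then show ?thesis
    unfolding sigma_s_def by (rule cover_num_le_2_if_proper_cover_pair)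
qed

lemma group_if_two_less_sigma_s:
  assumes "monoidal_subsemigroup T G" "2 < sigma_s G T"
  shows "\<exists>e. group (G\<lparr>carrier := T, one := e\<rparr>)"
proof -
  obtain e where T: "subsemigroup T G" and e: "e \<in> T" "\<forall>x\<in>T. e \<otimes> x = x \<and> x \<otimes> e = x"
    using assms(1) by (auto simp: monoidal_subsemigroup_def)
  have "\<exists>y\<in>T. y \<otimes> x = e" if "x \<in> T" for x
    using sigma_s_le_2_if_not_left_invertible [OF T e(1) _ that] e(2) assms(2) by force
  with T e show ?thesis
    by (intro exI groupI) (auto simp: subsemigroup_def m_assoc subset_iff)
qed

lemma monoidal_subsemigroup_if_group:
  assumes "subsemigroup T G" "group (G\<lparr>carrier := T, one := e\<rparr>)"
  shows "monoidal_subsemigroup T G"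
proof -
  interpret T: group "G\<lparr>carrier := T, one := e\<rparr>" by fact
  show ?thesis
    using assms(1) T.one_closed T.l_one T.r_one by (auto simp: monoidal_subsemigroup_def)
qed

end

theorem mainTheorem20:
  fixes M :: "('a, 'b) monoid_scheme"
  assumes "monoid M"
  shows "(sigma_m_star M < sigma_m M \<longleftrightarrow>
            subsemigroup (carrier M - {\<one>\<^bsub>M\<^esub>}) M \<and>
            (\<exists>e. group (M\<lparr>carrier := carrier M - {\<one>\<^bsub>M\<^esub>}, one := e\<rparr>)) \<and>
            sigma_s M (carrier M - {\<one>\<^bsub>M\<^esub>}) > 2)
       \<and> (sigma_m_star M < sigma_m M \<longrightarrow> sigma_m_star M = 2)"
proof -
  interpret monoid M by fact
  let ?T = "carrier M - {\<one>\<^bsub>M\<^esub>}"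
  have two_le: "2 \<le> sigma_m_star M"
    unfolding sigma_m_star_def by (rule two_le_cover_num)
  have forward: "monoidal_subsemigroup ?T M \<and> 2 < sigma_s M ?T"
    if less: "sigma_m_star M < sigma_m M"
  proof -
    have "monoidal_subsemigroup ?T M"
      using less by (rule monoidal_subsemigroup_if_sigma_m_star_less_sigma_m)
    moreover from this have "sigma_m M = sigma_s M ?T"
      by (intro sigma_m_eq_sigma_s) (simp add: monoidal_subsemigroup_def)
    ultimately show ?thesis using two_le less by (metis order.strict_trans1)
  qed
  have backward: "sigma_m_star M < sigma_m M"
    if "subsemigroup ?T M" "group (M\<lparr>carrier := ?T, one := e\<rparr>)" "2 < sigma_s M ?T" for e
  proof -
    have "sigma_m_star M \<le> 2"
      using that by (intro sigma_m_star_le_2 monoidal_subsemigroup_if_group)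
    also have "2 < sigma_s M ?T" by fact
    also have "\<dots> = sigma_m M" using that(1) by (simp add: sigma_m_eq_sigma_s)
    finally show ?thesis .
  qed
  show ?thesis
    using forward backward group_if_two_less_sigma_s sigma_m_star_le_2 two_le
    by (meson monoidal_subsemigroup_def order.antisym)
qed

end
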